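(* Let $F$ be a field and let $R$ be an $F$-algebra which satisfies (NK). Then there exists an $F$-subalgebra $A$ of $R$ which satisfies (NK) and such that $\dim_F(A)\le\omega$ (i.e. $A$ has countable dimension over $F$).
   Context: All rings are associative with unit. A right ideal is nil if all its elements are nilpotent. A ring satisfies the condition (NK) if it contains two nil right ideals whose sum is not nil. *)

theory Defs
  imports Main "HOL.Modules" "HOL-Library.Countable_Set"
begin

definition f_algebra :: "('f::field \<Rightarrow> 'r::ring_1 \<Rightarrow> 'r) \<Rightarrow> bool" where
  "f_algebra scale \<longleftrightarrow> module scale \<and>
     (\<forall>c x y. scale c (x * y) = scale c x * y) \<and>
     (\<forall>c x y. scale c (x * y) = x * scale c y)"

definition subalgebra :: "('f::field \<Rightarrow> 'r::ring_1 \<Rightarrow> 'r) \<Rightarrow> 'r set \<Rightarrow> bool" where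
  "subalgebra scale A \<longleftrightarrow> module.subspace scale A \<and> 1 \<in> A \<and>
     (\<forall>x\<in>A. \<forall>y\<in>A. x * y \<in> A)"

definition right_ideal_in :: "'r::ring_1 set \<Rightarrow> 'r set \<Rightarrow> bool" where
  "right_ideal_in S I \<longleftrightarrow> I \<subseteq> S \<and> 0 \<in> I \<and>
     (\<forall>x\<in>I. \<forall>y\<in>I. x + y \<in> I) \<and> (\<forall>x\<in>I. - x \<in> I) \<and>
     (\<forall>x\<in>I. \<forall>a\<in>S. x * a \<in> I)"

definition nil_set :: "'r::ring_1 set \<Rightarrow> bool" where
  "nil_set I \<longleftrightarrow> (\<forall>x\<in>I. \<exists>n. x ^ n = 0)"

definition NK :: "'r::ring_1 set \<Rightarrow> bool" where
  "NK S \<longleftrightarrow> (\<exists>I J. right_ideal_in S I \<and> right_ideal_in S J \<and> nil_set I \<and> nil_set J \<and>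
     \<not> nil_set {x + y | x y. x \<in> I \<and> y \<in> J})"

end

theory Submission
  imports Defs "HOL.Vector_Spaces"
begin

text \<open>If I and J are nil right ideals of R and a \<in> I, b \<in> J with a + b not nilpotent,
  then I \<inter> S and J \<inter> S witness (NK) in every subring S containing a and b.  The
  F-subalgebra generated by a and b is spanned by the countably many words in a and b,
  so a basis extracted from these words is countable.\<close>

definition subring :: "'r::ring_1 set \<Rightarrow> bool" where
  "subring S \<longleftrightarrow> 0 \<in> S \<and> (\<forall>x\<in>S. \<forall>y\<in>S. x + y \<in> S) \<and> (\<forall>x\<in>S. - x \<in> S) \<and>
     (\<forall>x\<in>S. \<forall>y\<in>S. x * y \<in> S)"

definition submonoid_generated :: "'a::monoid_mult set \<Rightarrow> 'a set" where
  "submonoid_generated X = prod_list ` lists X"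

lemma one_in_submonoid_generated: "1 \<in> submonoid_generated X"
  unfolding submonoid_generated_def by (intro image_eqI[of _ _ "[]"]) auto

lemma generator_in_submonoid_generated: "x \<in> X \<Longrightarrow> x \<in> submonoid_generated X"
  unfolding submonoid_generated_def by (intro image_eqI[of _ _ "[x]"]) auto

lemma mult_in_submonoid_generated:
  assumes "x \<in> submonoid_generated X" "y \<in> submonoid_generated X"
  shows "x * y \<in> submonoid_generated X"
proof -
  obtain xs ys where "xs \<in> lists X" "ys \<in> lists X" "x = prod_list xs" "y = prod_list ys"
    using assms unfolding submonoid_generated_def by blast
  then show ?thesis
    unfolding submonoid_generated_def by (intro image_eqI[of _ _ "xs @ ys"]) auto
qed

lemma countable_submonoid_generated:
  "countable X \<Longrightarrow> countable (submonoid_generated X)"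
  unfolding submonoid_generated_def by simp

lemma right_ideal_in_Int_subring:
  assumes "right_ideal_in UNIV I" "subring S"
  shows "right_ideal_in S (I \<inter> S)"
  using assms unfolding right_ideal_in_def subring_def by auto

lemma nil_set_subset: "nil_set I \<Longrightarrow> J \<subseteq> I \<Longrightarrow> nil_set J"
  unfolding nil_set_def by blast

lemma NK_UNIV_obtains_generators:
  assumes "NK (UNIV :: 'r::ring_1 set)"
  obtains a b :: "'r::ring_1" where "\<And>S. subring S \<Longrightarrow> a \<in> S \<Longrightarrow> b \<in> S \<Longrightarrow> NK S"
proof -
  obtain I J :: "'r set" where I: "right_ideal_in UNIV I" and J: "right_ideal_in UNIV J"
    and "nil_set I" "nil_set J" and not_nil: "\<not> nil_set {x + y | x y. x \<in> I \<and> y \<in> J}"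
    using assms unfolding NK_def by blast
  obtain a b where "a \<in> I" "b \<in> J" and not_nilpotent: "\<forall>n. (a + b) ^ n \<noteq> 0"
    using not_nil unfolding nil_set_def by blast
  have "NK S" if "subring S" "a \<in> S" "b \<in> S" for S
    unfolding NK_def
  proof (intro exI conjI)
    show "right_ideal_in S (I \<inter> S)" "right_ideal_in S (J \<inter> S)"
      using right_ideal_in_Int_subring I J \<open>subring S\<close> by blast+
    show "nil_set (I \<inter> S)" "nil_set (J \<inter> S)"
      using \<open>nil_set I\<close> \<open>nil_set J\<close> nil_set_subset by blast+
    have "a + b \<in> {x + y | x y. x \<in> I \<inter> S \<and> y \<in> J \<inter> S}"
      using \<open>a \<in> I\<close> \<open>b \<in> J\<close> that by blast
    then show "\<not> nil_set {x + y | x y. x \<in> I \<inter> S \<and> y \<in> J \<inter> S}"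
      using not_nilpotent unfolding nil_set_def by blast
  qed
  then show thesis by (rule that)
qed

lemma subring_if_subalgebra:
  assumes "f_algebra scale" "subalgebra scale A"
  shows "subring A"
proof -
  interpret module scale
    using assms(1) unfolding f_algebra_def by blast
  show ?thesis
    using assms(2) subspace_neg[of A] unfolding subalgebra_def subring_def subspace_def
    by blast
qed

lemma span_mult_closed:
  fixes scale :: "'f::field \<Rightarrow> 'r::ring_1 \<Rightarrow> 'r"
  assumes "f_algebra scale" and W: "\<And>x y. x \<in> W \<Longrightarrow> y \<in> W \<Longrightarrow> x * y \<in> W"
    and "x \<in> module.span scale W" "y \<in> module.span scale W"
  shows "x * y \<in> module.span scale W"
proof -
  interpret module scale
    using assms(1) unfolding f_algebra_def by blast
  have scale_left: "scale c (x * y) = scale c x * y"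
    and scale_right: "scale c (x * y) = x * scale c y" for c x y
    using assms(1) unfolding f_algebra_def by blast+
  have generator_mult: "w * y \<in> span W" if "w \<in> W" "y \<in> span W" for w y
    using that(2)
  proof (induction y rule: span_induct_alt)
    case base
    then show ?case by (simp add: span_zero)
  next
    case (step c v z)
    have "w * (scale c v + z) = scale c (w * v) + w * z"
      by (simp add: scale_right distrib_left)
    then show ?case
      using step W[OF \<open>w \<in> W\<close>] by (simp add: span_add span_scale span_base)
  qed
  show ?thesis
    using \<open>x \<in> span W\<close>
  proof (induction x rule: span_induct_alt)
    case base
    then show ?case by (simp add: span_zero)
  next
    case (step c w z)
    have "(scale c w + z) * y = scale c (w * y) + z * y"
      by (simp add: scale_left distrib_right)
    then show ?case
      using step generator_mult[OF _ \<open>y \<in> span W\<close>] by (simp add: span_add span_scale)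
  qed
qed

lemma subalgebra_span:
  assumes "f_algebra scale" "1 \<in> W" "\<And>x y. x \<in> W \<Longrightarrow> y \<in> W \<Longrightarrow> x * y \<in> W"
  shows "subalgebra scale (module.span scale W)"
proof -
  interpret module scale
    using assms(1) unfolding f_algebra_def by blast
  show ?thesis
    unfolding subalgebra_def
    using span_mult_closed[OF assms(1,3)] span_base[OF assms(2)] by simp
qed

lemma countable_basis_of_span:
  fixes scale :: "'f::field \<Rightarrow> 'v::ab_group_add \<Rightarrow> 'v"
  assumes "module scale" "countable W"
  obtains B where "B \<subseteq> W" "countable B" "module.independent scale B"
    "module.span scale B = module.span scale W"
proof -
  interpret vector_space scale
    using assms(1) by (simp add: module_iff_vector_space)
  obtain B where "B \<subseteq> W" "independent B" "W \<subseteq> span B"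
    using maximal_independent_subset by blast
  moreover have "span B = span W"
    using calculation by (simp add: span_eq span_superset subset_trans)
  moreover have "countable B"
    using \<open>B \<subseteq> W\<close> assms(2) by (rule countable_subset)
  ultimately show thesis
    using that by blast
qed

theorem mainTheorem3:
  fixes scale :: "'f::field \<Rightarrow> 'r::ring_1 \<Rightarrow> 'r"
  assumes "f_algebra scale"
    and "NK (UNIV :: 'r set)"
  shows "\<exists>A. subalgebra scale A \<and> NK A \<and>
           (\<exists>B. B \<subseteq> A \<and> countable B \<and> module.independent scale B \<and> module.span scale B = A)"
proof -
  have "module scale"
    using assms(1) unfolding f_algebra_def by blast
  obtain a b :: 'r where NK_if_contains: "\<And>S. subring S \<Longrightarrow> a \<in> S \<Longrightarrow> b \<in> S \<Longrightarrow> NK S"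
    using NK_UNIV_obtains_generators[OF assms(2)] by blast
  define W where "W = submonoid_generated {a, b}"
  define A where "A = module.span scale W"
  have "subalgebra scale A"
    unfolding A_def W_def using assms(1) one_in_submonoid_generated mult_in_submonoid_generated
    by (rule subalgebra_span)
  moreover have "a \<in> A" "b \<in> A"
    unfolding A_def W_def
    by (simp_all add: module.span_base[OF \<open>module scale\<close>] generator_in_submonoid_generated)
  ultimately have "NK A"
    using NK_if_contains subring_if_subalgebra[OF assms(1)] by blast
  have "countable W"
    unfolding W_def by (simp add: countable_submonoid_generated)
  then obtain B where "B \<subseteq> W" "countable B" "module.independent scale B" "module.span scale B = A"
    unfolding A_def by (rule countable_basis_of_span[OF \<open>module scale\<close>])
  moreover have "B \<subseteq> A"
    using \<open>B \<subseteq> W\<close> module.span_superset[OF \<open>module scale\<close>] unfolding A_def by blast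
  ultimately show ?thesis
    using \<open>subalgebra scale A\<close> \<open>NK A\<close> by blast
qed

end
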